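(* For $s\in\mathcal S(0)$ and $\theta\in\Theta$ let $U_s(\theta)=\int_0^\theta s(x)\,dx+v(\theta)$ (the payoff of type $\theta$ under interim status $s$ when the lowest level is free and prices are nonnegative). Then $U_{1/2}(\theta)\ge U_s(\theta)$ for all $\theta\in\Theta$ and all $s\in\mathcal S(0)$ (where $U_{1/2}$ corresponds to $s\equiv\frac12$) if and only if $F(\theta)\le\theta/\bar\theta$ for all $\theta\in\Theta$. In particular, this holds whenever $f$ is nondecreasing on $\Theta$.
   Context: Let $0<\bar\theta<\infty$, $\Theta=[0,\bar\theta]$, $F$ a cdf on $\Theta$ with continuous, strictly positive density $f$, $dF=f\,d\theta$. The intrinsic value $v:\Theta\to[0,\infty)$ is differentiable. For bounded measurable $a,b$ on $\Theta$, write $b\in\mathrm{MPS}(a)$ if $\int_x^{\bar\theta}b\,dF\le\int_x^{\bar\theta}a\,dF$ for all $x\in\Theta$, with equality at $x=0$. $\mathcal S(0)$ is the set of nondecreasing $s:\Theta\to[0,1]$ with $s\in\mathrm{MPS}(F)$. *)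

theory Defs
  imports "HOL-Analysis.Analysis"
begin

definition MPS :: "(real \<Rightarrow> real) \<Rightarrow> real \<Rightarrow> (real \<Rightarrow> real) \<Rightarrow> (real \<Rightarrow> real) set" where
  "MPS f tb a = {b. (\<forall>x\<in>{0..tb}. integral {x..tb} (\<lambda>t. b t * f t) \<le> integral {x..tb} (\<lambda>t. a t * f t))
                   \<and> integral {0..tb} (\<lambda>t. b t * f t) = integral {0..tb} (\<lambda>t. a t * f t)}"

definition S0 :: "(real \<Rightarrow> real) \<Rightarrow> real \<Rightarrow> (real \<Rightarrow> real) \<Rightarrow> (real \<Rightarrow> real) set" where
  "S0 f tb F = {s. mono_on {0..tb} s \<and> (\<forall>\<theta>\<in>{0..tb}. 0 \<le> s \<theta> \<and> s \<theta> \<le> 1) \<and> s \<in> MPS f tb F}"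

definition U :: "(real \<Rightarrow> real) \<Rightarrow> (real \<Rightarrow> real) \<Rightarrow> real \<Rightarrow> real" where
  "U v s \<theta> = integral {0..\<theta>} s + v \<theta>"

end

theory Submission
  imports Defs
begin

text \<open>Under \<open>dF\<close> the variable \<open>F(\<theta>)\<close> is uniform on \<open>[0,1]\<close>, so every \<open>s \<in> \<S>(0)\<close> has
  \<open>\<integral> s dF = 1/2\<close>. If \<open>F\<close> lies below the uniform cdf \<open>\<theta>/\<theta>\<^sub>b\<close>, then \<open>dF\<close> dominates the uniform
  distribution and a nondecreasing \<open>s\<close> has uniform mean at most \<open>\<integral> s dF = 1/2\<close>; since averages of a
  nondecreasing function over initial segments increase, \<open>\<integral>\<^sub>0\<^sup>\<theta> s \<le> \<theta>/2\<close> for every \<open>\<theta>\<close>, while \<open>v\<close>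
  cancels from the comparison. Conversely, if \<open>F(t\<^sub>0) > t\<^sub>0/\<theta>\<^sub>b\<close>, replacing \<open>F\<close> by its
  \<open>dF\<close>-averages on \<open>[0,t\<^sub>0)\<close> and \<open>[t\<^sub>0,\<theta>\<^sub>b]\<close> gives a status in \<open>\<S>(0)\<close> whose uniform mean exceeds
  \<open>1/2\<close>, so the highest type strictly prefers it.
  For nondecreasing \<open>f\<close>, the averaging property applied to \<open>f\<close> gives \<open>F(\<theta>) \<le> \<theta>/\<theta>\<^sub>b\<close>.\<close>

lemma mono_on_prefix_average_le:
  fixes g :: "real \<Rightarrow> real"
  assumes mono: "mono_on {a..b} g" and x: "a \<le> x" "x \<le> b"
  shows "(b - a) * integral {a..x} g \<le> (x - a) * integral {a..b} g"
proof -
  have g_int: "g integrable_on {a..x}" "g integrable_on {x..b}"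
    by (rule integrable_on_mono_on, rule mono_on_subset[OF mono], use x in auto)+
  have split: "integral {a..x} g + integral {x..b} g = integral {a..b} g"
    using Henstock_Kurzweil_Integration.integral_combine[OF x integrable_on_mono_on[OF mono]] .
  have "integral {a..x} g \<le> integral {a..x} (\<lambda>_. g x)"
    by (rule integral_le[OF g_int(1)]) (use mono x in \<open>auto simp: mono_on_def\<close>)
  then have lower: "integral {a..x} g \<le> (x - a) * g x"
    using x by simp
  have "integral {x..b} (\<lambda>_. g x) \<le> integral {x..b} g"
    by (rule integral_le[OF _ g_int(2)]) (use mono x in \<open>auto simp: mono_on_def\<close>)
  then have upper: "(b - x) * g x \<le> integral {x..b} g"
    using x by simp
  have "(b - x) * integral {a..x} g \<le> (x - a) * integral {x..b} g"
    using mult_left_mono[OF lower, of "b - x"] mult_left_mono[OF upper, of "x - a"] x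
    by (simp add: algebra_simps)
  then show ?thesis
    unfolding split[symmetric] by (simp add: algebra_simps)
qed

lemma mono_on_integral_mult_nonneg:
  fixes s w :: "real \<Rightarrow> real"
  assumes w_int: "w integrable_on {a..b}" and "a \<le> b" and mono: "mono_on {a..b} s"
    and prefix_nonpos: "\<forall>x\<in>{a..b}. integral {a..x} w \<le> 0"
    and total_zero: "integral {a..b} w = 0"
  shows "(\<lambda>x. s x * w x) integrable_on {a..b}" "0 \<le> integral {a..b} (\<lambda>x. s x * w x)"
proof -
  obtain c where c: "c \<in> {a..b}" and
    has_int: "((\<lambda>x. s x * w x) has_integral (s a * integral {a..c} w + s b * integral {c..b} w)) {a..b}"
    using second_mean_value_theorem_full[OF w_int \<open>a \<le> b\<close>, of s] mono
    by (auto simp: mono_on_def)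
  from has_int show "(\<lambda>x. s x * w x) integrable_on {a..b}"
    by (rule has_integral_integrable)
  have "integral {c..b} w = - integral {a..c} w"
    using Henstock_Kurzweil_Integration.integral_combine[of a c b w] c w_int total_zero by auto
  then have "integral {a..b} (\<lambda>x. s x * w x) = (s a - s b) * integral {a..c} w"
    using integral_unique[OF has_int] by (simp add: algebra_simps)
  moreover have "s a \<le> s b"
    using mono \<open>a \<le> b\<close> by (auto simp: mono_on_def)
  ultimately show "0 \<le> integral {a..b} (\<lambda>x. s x * w x)"
    using prefix_nonpos c by (simp add: mult_nonpos_nonpos)
qed

lemma U_le_U_half_iff:
  assumes "0 \<le> \<theta>"
  shows "U v s \<theta> \<le> U v (\<lambda>_. 1/2) \<theta> \<longleftrightarrow> integral {0..\<theta>} s \<le> \<theta> / 2"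
  using assms unfolding U_def by simp

locale interval_density =
  fixes tb :: real and f F :: "real \<Rightarrow> real"
  assumes tb_pos: "0 < tb"
    and f_cont: "continuous_on {0..tb} f"
    and f_pos: "\<forall>\<theta>\<in>{0..tb}. 0 < f \<theta>"
    and F_eq: "\<forall>\<theta>\<in>{0..tb}. F \<theta> = integral {0..\<theta>} f"
    and F_total: "F tb = 1"
begin

lemma F_zero: "F 0 = 0"
  using F_eq tb_pos by simp

lemma has_integral_density:
  assumes "0 \<le> a" "a \<le> b" "b \<le> tb"
  shows "(f has_integral (F b - F a)) {a..b}"
proof -
  have "((\<lambda>u. integral {0..u} f) has_vector_derivative f x) (at x within {a..b})"
    if "x \<in> {a..b}" for x
    using that assms
    by (intro has_vector_derivative_within_subset[OF integral_has_vector_derivative[OF f_cont]]) auto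
  from fundamental_theorem_of_calculus[OF \<open>a \<le> b\<close> this] show ?thesis
    using F_eq assms by simp
qed

lemma F_mono:
  assumes "0 \<le> a" "a \<le> b" "b \<le> tb"
  shows "F a \<le> F b"
  using has_integral_nonneg[OF has_integral_density[OF assms]] f_pos assms
  by (simp add: less_imp_le)

lemma F_bounds:
  assumes "0 \<le> x" "x \<le> tb"
  shows "0 \<le> F x" "F x \<le> 1"
  using F_mono[of 0 x] F_mono[of x tb] F_zero F_total assms by auto

lemma has_integral_F_density:
  assumes "0 \<le> a" "a \<le> tb"
  shows "((\<lambda>t. F t * f t) has_integral ((1 - (F a)\<^sup>2) / 2)) {a..tb}"
proof -
  have "((\<lambda>u. (integral {0..u} f)\<^sup>2 / 2) has_vector_derivative integral {0..x} f * f x)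
      (at x within {a..tb})" if x: "x \<in> {a..tb}" for x
  proof -
    have "((\<lambda>u. integral {0..u} f) has_real_derivative f x) (at x within {a..tb})"
      using x assms by (intro DERIV_subset[OF integral_has_real_derivative[OF f_cont]]) auto
    then have "((\<lambda>u. (integral {0..u} f)\<^sup>2 / 2) has_real_derivative integral {0..x} f * f x)
        (at x within {a..tb})"
      by (auto intro!: derivative_eq_intros)
    then show ?thesis
      by (simp add: has_real_derivative_iff_has_vector_derivative)
  qed
  from fundamental_theorem_of_calculus[OF \<open>a \<le> tb\<close> this]
  have "((\<lambda>t. integral {0..t} f * f t) has_integral ((F tb)\<^sup>2 / 2 - (F a)\<^sup>2 / 2)) {a..tb}"
    using F_eq assms tb_pos by simp
  then show ?thesis
    using F_eq assms F_total by (subst has_integral_cong) (auto simp: diff_divide_distrib)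
qed

lemma integral_F_density_total: "integral {0..tb} (\<lambda>t. F t * f t) = 1/2"
  using integral_unique[OF has_integral_F_density[of 0]] F_zero tb_pos by simp

lemma S0_integral_density:
  assumes "s \<in> S0 f tb F"
  shows "integral {0..tb} (\<lambda>t. s t * f t) = 1/2"
  using assms integral_F_density_total unfolding S0_def MPS_def by auto

lemma uniform_mean_le_if_F_le_uniform:
  assumes F_le: "\<forall>\<theta>\<in>{0..tb}. F \<theta> \<le> \<theta> / tb" and mono: "mono_on {0..tb} s"
  shows "integral {0..tb} s \<le> tb * integral {0..tb} (\<lambda>t. s t * f t)"
proof -
  define w where "w x = f x - 1 / tb" for x
  have has_int_w: "(w has_integral (F x - x / tb)) {0..x}" if "0 \<le> x" "x \<le> tb" for x
    using has_integral_diff[OF has_integral_density[of 0 x] has_integral_const_real[of "1/tb" 0 x]]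
      that F_zero unfolding w_def by simp
  have w_int: "w integrable_on {0..tb}"
    using has_int_w[of tb] tb_pos by (auto intro: has_integral_integrable)
  have prefix_nonpos: "\<forall>x\<in>{0..tb}. integral {0..x} w \<le> 0"
    using integral_unique[OF has_int_w] F_le by simp
  have total_zero: "integral {0..tb} w = 0"
    using integral_unique[OF has_int_w[of tb]] F_total tb_pos by simp
  note sw = mono_on_integral_mult_nonneg[OF w_int _ mono prefix_nonpos total_zero]
  have "((\<lambda>x. s x * w x + s x / tb) has_integral
      (integral {0..tb} (\<lambda>x. s x * w x) + integral {0..tb} s / tb)) {0..tb}"
    using sw(1) tb_pos
    by (intro has_integral_add has_integral_divide integrable_integral integrable_on_mono_on[OF mono])
      simp
  moreover have "(\<lambda>x. s x * w x + s x / tb) = (\<lambda>x. s x * f x)"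
    using tb_pos unfolding w_def by (auto simp: field_simps)
  ultimately have "integral {0..tb} (\<lambda>x. s x * f x) = integral {0..tb} (\<lambda>x. s x * w x) + integral {0..tb} s / tb"
    by (simp add: integral_unique)
  then show ?thesis
    using sw(2) tb_pos by (simp add: field_simps)
qed

lemma integral_le_half_if_F_le_uniform:
  assumes F_le: "\<forall>\<theta>\<in>{0..tb}. F \<theta> \<le> \<theta> / tb" and s: "s \<in> S0 f tb F"
    and \<theta>: "0 \<le> \<theta>" "\<theta> \<le> tb"
  shows "integral {0..\<theta>} s \<le> \<theta> / 2"
proof -
  have mono: "mono_on {0..tb} s"
    using s unfolding S0_def by simp
  have "integral {0..tb} s \<le> tb / 2"
    using uniform_mean_le_if_F_le_uniform[OF F_le mono] S0_integral_density[OF s] by simp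
  then have "\<theta> * integral {0..tb} s \<le> \<theta> * (tb / 2)"
    using \<theta> by (intro mult_left_mono) auto
  with mono_on_prefix_average_le[OF mono \<theta>] have "tb * integral {0..\<theta>} s \<le> tb * (\<theta> / 2)"
    by (simp add: mult.commute)
  then show ?thesis
    using tb_pos by simp
qed

lemma F_le_uniform_if_mono_density:
  assumes "mono_on {0..tb} f" "0 \<le> \<theta>" "\<theta> \<le> tb"
  shows "F \<theta> \<le> \<theta> / tb"
  using mono_on_prefix_average_le[OF assms] F_eq F_total assms tb_pos
  by (simp add: pos_le_divide_eq mult.commute)

text \<open>The \<open>dF\<close>-averages of \<open>F\<close> over \<open>[0, t\<^sub>0)\<close> and \<open>[t\<^sub>0, \<theta>\<^sub>b]\<close>.\<close>

definition step_status :: "real \<Rightarrow> real \<Rightarrow> real" where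
  "step_status t\<^sub>0 x = (if x < t\<^sub>0 then F t\<^sub>0 / 2 else (1 + F t\<^sub>0) / 2)"

lemma has_integral_step_status_density:
  assumes t\<^sub>0: "0 < t\<^sub>0" "t\<^sub>0 \<le> tb" and x: "0 \<le> x" "x \<le> tb"
  shows "((\<lambda>t. step_status t\<^sub>0 t * f t) has_integral
    (if x < t\<^sub>0 then (1 - F t\<^sub>0 * F x) / 2 else (1 + F t\<^sub>0) * (1 - F x) / 2)) {x..tb}"
proof (cases "x < t\<^sub>0")
  case True
  have scaled: "((\<lambda>t. F t\<^sub>0 / 2 * f t) has_integral (F t\<^sub>0 / 2 * (F t\<^sub>0 - F x))) {x..t\<^sub>0}"
    using True x t\<^sub>0 by (intro has_integral_mult_right has_integral_density) auto
  have below: "((\<lambda>t. step_status t\<^sub>0 t * f t) has_integral (F t\<^sub>0 / 2 * (F t\<^sub>0 - F x))) {x..t\<^sub>0}"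
    by (rule has_integral_spike_finite[of "{t\<^sub>0}", OF _ _ scaled]) (auto simp: step_status_def)
  have "((\<lambda>t. (1 + F t\<^sub>0) / 2 * f t) has_integral ((1 + F t\<^sub>0) / 2 * (F tb - F t\<^sub>0))) {t\<^sub>0..tb}"
    using t\<^sub>0 by (intro has_integral_mult_right has_integral_density) auto
  then have above: "((\<lambda>t. step_status t\<^sub>0 t * f t) has_integral ((1 + F t\<^sub>0) / 2 * (1 - F t\<^sub>0))) {t\<^sub>0..tb}"
    using F_total by (subst has_integral_cong) (auto simp: step_status_def)
  have "((\<lambda>t. step_status t\<^sub>0 t * f t) has_integral
      (F t\<^sub>0 / 2 * (F t\<^sub>0 - F x) + (1 + F t\<^sub>0) / 2 * (1 - F t\<^sub>0))) {x..tb}"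
    using True t\<^sub>0 by (intro has_integral_combine[OF _ _ below above]) auto
  then show ?thesis
    by (rule has_integral_eq_rhs) (simp add: True field_simps)
next
  case False
  have "((\<lambda>t. (1 + F t\<^sub>0) / 2 * f t) has_integral ((1 + F t\<^sub>0) / 2 * (F tb - F x))) {x..tb}"
    using x by (intro has_integral_mult_right has_integral_density) auto
  then show ?thesis
    using False F_total by (subst has_integral_cong) (auto simp: step_status_def)
qed

lemma step_status_in_S0:
  assumes t\<^sub>0: "0 < t\<^sub>0" "t\<^sub>0 \<le> tb"
  shows "step_status t\<^sub>0 \<in> S0 f tb F"
  unfolding S0_def MPS_def mem_Collect_eq
proof (intro conjI ballI)
  show "mono_on {0..tb} (step_status t\<^sub>0)"
    by (auto simp: mono_on_def step_status_def)
  have q: "0 \<le> F t\<^sub>0" "F t\<^sub>0 \<le> 1"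
    using F_bounds t\<^sub>0 by auto
  fix x assume x: "x \<in> {0..tb}"
  show "0 \<le> step_status t\<^sub>0 x" "step_status t\<^sub>0 x \<le> 1"
    using q by (auto simp: step_status_def)
  have Fx: "0 \<le> F x" "F x \<le> 1"
    using F_bounds x by auto
  have F_int: "integral {x..tb} (\<lambda>t. F t * f t) = (1 - F x * F x) / 2"
    using integral_unique[OF has_integral_F_density] x by (simp add: power2_eq_square)
  show "integral {x..tb} (\<lambda>t. step_status t\<^sub>0 t * f t) \<le> integral {x..tb} (\<lambda>t. F t * f t)"
  proof (cases "x < t\<^sub>0")
    case True
    then have "F x * F x \<le> F t\<^sub>0 * F x"
      using F_mono[of x t\<^sub>0] Fx x t\<^sub>0 by (intro mult_right_mono) auto
    then show ?thesis
      using integral_unique[OF has_integral_step_status_density[OF t\<^sub>0, of x]] x True F_int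
      by simp
  next
    case False
    then have "(1 - F x) * F t\<^sub>0 \<le> (1 - F x) * F x"
      using F_mono[of t\<^sub>0 x] Fx x t\<^sub>0 by (intro mult_left_mono) auto
    then show ?thesis
      using integral_unique[OF has_integral_step_status_density[OF t\<^sub>0, of x]] x False F_int
      by (simp add: algebra_simps)
  qed
next
  show "integral {0..tb} (\<lambda>t. step_status t\<^sub>0 t * f t) = integral {0..tb} (\<lambda>t. F t * f t)"
    using integral_unique[OF has_integral_step_status_density[OF t\<^sub>0, of 0]] t\<^sub>0 F_zero
      integral_F_density_total by simp
qed

lemma integral_step_status:
  assumes t\<^sub>0: "0 < t\<^sub>0" "t\<^sub>0 \<le> tb"
  shows "integral {0..tb} (step_status t\<^sub>0) = tb / 2 + (F t\<^sub>0 * tb - t\<^sub>0) / 2"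
proof -
  have const: "((\<lambda>_. F t\<^sub>0 / 2) has_integral (t\<^sub>0 * (F t\<^sub>0 / 2))) {0..t\<^sub>0}"
    using has_integral_const_real[of "F t\<^sub>0 / 2" 0 t\<^sub>0] t\<^sub>0 by simp
  have "(step_status t\<^sub>0 has_integral (t\<^sub>0 * (F t\<^sub>0 / 2))) {0..t\<^sub>0}"
    by (rule has_integral_spike_finite[of "{t\<^sub>0}", OF _ _ const]) (auto simp: step_status_def)
  moreover have "(step_status t\<^sub>0 has_integral ((tb - t\<^sub>0) * ((1 + F t\<^sub>0) / 2))) {t\<^sub>0..tb}"
    using has_integral_const_real[of "(1 + F t\<^sub>0) / 2" t\<^sub>0 tb] t\<^sub>0
    by (subst has_integral_cong) (auto simp: step_status_def)
  ultimately have "(step_status t\<^sub>0 has_integral (t\<^sub>0 * (F t\<^sub>0 / 2) + (tb - t\<^sub>0) * ((1 + F t\<^sub>0) / 2))) {0..tb}"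
    using t\<^sub>0 by (intro has_integral_combine) auto
  then show ?thesis
    by (simp add: integral_unique field_simps)
qed

lemma F_le_uniform_if_S0_integral_le_half:
  assumes S0_le: "\<forall>s\<in>S0 f tb F. integral {0..tb} s \<le> tb / 2"
    and \<theta>: "0 \<le> \<theta>" "\<theta> \<le> tb"
  shows "F \<theta> \<le> \<theta> / tb"
proof (rule ccontr)
  assume "\<not> F \<theta> \<le> \<theta> / tb"
  then have "\<theta> < F \<theta> * tb"
    using tb_pos by (simp add: not_le pos_divide_less_eq)
  moreover have "0 < \<theta>"
    using calculation F_zero \<theta> by (cases "\<theta> = 0") auto
  ultimately show False
    using S0_le step_status_in_S0[of \<theta>] integral_step_status[of \<theta>] \<theta> by auto
qed

end

theorem mainTheorem16:
  fixes tb :: real and F f v :: "real \<Rightarrow> real"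
  assumes tb_pos: "0 < tb"
    and f_cont: "continuous_on {0..tb} f"
    and f_pos: "\<forall>\<theta>\<in>{0..tb}. 0 < f \<theta>"
    and F_def: "\<forall>\<theta>\<in>{0..tb}. F \<theta> = integral {0..\<theta>} f"
    and F_total: "F tb = 1"
    and v_nonneg: "\<forall>\<theta>\<in>{0..tb}. 0 \<le> v \<theta>"
    and v_diff: "\<forall>\<theta>\<in>{0..tb}. v differentiable (at \<theta> within {0..tb})"
  shows "((\<forall>\<theta>\<in>{0..tb}. \<forall>s\<in>S0 f tb F. U v (\<lambda>_. 1/2) \<theta> \<ge> U v s \<theta>)
            \<longleftrightarrow> (\<forall>\<theta>\<in>{0..tb}. F \<theta> \<le> \<theta> / tb))
         \<and> (mono_on {0..tb} f \<longrightarrow> (\<forall>\<theta>\<in>{0..tb}. F \<theta> \<le> \<theta> / tb))"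
proof -
  interpret interval_density tb f F
    using tb_pos f_cont f_pos F_def F_total by unfold_locales
  have "(\<forall>\<theta>\<in>{0..tb}. \<forall>s\<in>S0 f tb F. U v (\<lambda>_. 1/2) \<theta> \<ge> U v s \<theta>)
      \<longleftrightarrow> (\<forall>\<theta>\<in>{0..tb}. \<forall>s\<in>S0 f tb F. integral {0..\<theta>} s \<le> \<theta> / 2)"
    using U_le_U_half_iff by auto
  also have "\<dots> \<longleftrightarrow> (\<forall>\<theta>\<in>{0..tb}. F \<theta> \<le> \<theta> / tb)"
  proof
    assume "\<forall>\<theta>\<in>{0..tb}. \<forall>s\<in>S0 f tb F. integral {0..\<theta>} s \<le> \<theta> / 2"
    then show "\<forall>\<theta>\<in>{0..tb}. F \<theta> \<le> \<theta> / tb"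
      using F_le_uniform_if_S0_integral_le_half tb_pos by auto
  qed (use integral_le_half_if_F_le_uniform in auto)
  finally show ?thesis
    using F_le_uniform_if_mono_density by auto
qed

end
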